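(* Let $G=(\mathcal{Y},E,f)$ be a curl consistent weighted digraph and let $C^{(i)},C^{(j)}\in\mathcal{Y}$ be distinct with neither $(C^{(i)},C^{(j)})$ nor $(C^{(j)},C^{(i)})$ in $E$. Let $\mathcal{B}^{(ij)}$ be the set of paths in $G$ from $C^{(i)}$ to $C^{(j)}$ and $\mathcal{B}^{(ji)}$ the set of paths from $C^{(j)}$ to $C^{(i)}$ (a minimum over the empty set is $+\infty$). If $x\in\mathbb{R}$ is such that the weighted digraph obtained from $G$ by adding the edge $(C^{(i)},C^{(j)})$ with weight $x$ is curl consistent, then $$1-\min_{\overline{B}\in\mathcal{B}^{(ji)}}W(G,\overline{B})<x<\min_{B\in\mathcal{B}^{(ij)}}W(G,B).$$
   Context: A weighted digraph $G=(\mathcal{Y},E,f)$ has $E$ a set of ordered pairs of distinct vertices and $f:E\to\mathbb{R}$, extended to reversed pairs by $f(b,a)=1-f(a,b)$; an edge may be traversed in either direction using this convention. A cycle is a sequence $(c_1,\dots,c_\ell)$ of $\ell\ge3$ pairwise distinct vertices with each consecutive pair and $(c_\ell,c_1)$ an edge in either direction; its curl is $f(c_\ell,c_1)+\sum_{t=1}^{\ell-1}f(c_t,c_{t+1})$. $G$ is curl consistent (a CCWD) if every cycle of length $\ell$ has curl strictly between $1$ and $\ell-1$. A path $B=(b_1,\dots,b_q)$ is a sequence of pairwise distinct vertices with consecutive pairs edges (in either direction); its weight is $W(G,B)=\sum_{t=1}^{q-1}f(b_t,b_{t+1})$. *)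

theory Defs
  imports Main "HOL-Library.Extended_Real"
begin

definition wdigraph :: "'a set \<Rightarrow> ('a \<times> 'a) set \<Rightarrow> bool" where
  "wdigraph Y E \<longleftrightarrow> finite Y \<and> E \<subseteq> Y \<times> Y \<and> (\<forall>(a,b)\<in>E. a \<noteq> b \<and> (b,a) \<notin> E)"

definition adj :: "('a \<times> 'a) set \<Rightarrow> 'a \<Rightarrow> 'a \<Rightarrow> bool" where
  "adj E a b \<longleftrightarrow> (a,b) \<in> E \<or> (b,a) \<in> E"

definition fw :: "('a \<times> 'a) set \<Rightarrow> ('a \<times> 'a \<Rightarrow> real) \<Rightarrow> 'a \<Rightarrow> 'a \<Rightarrow> real" where
  "fw E f a b = (if (a,b) \<in> E then f (a,b) else 1 - f (b,a))"

definition is_cycle :: "'a set \<Rightarrow> ('a \<times> 'a) set \<Rightarrow> 'a list \<Rightarrow> bool" where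
  "is_cycle Y E cs \<longleftrightarrow> length cs \<ge> 3 \<and> distinct cs \<and> set cs \<subseteq> Y \<and>
     (\<forall>t < length cs. adj E (cs ! t) (cs ! ((t + 1) mod length cs)))"

definition curl :: "('a \<times> 'a) set \<Rightarrow> ('a \<times> 'a \<Rightarrow> real) \<Rightarrow> 'a list \<Rightarrow> real" where
  "curl E f cs = (\<Sum>t < length cs. fw E f (cs ! t) (cs ! ((t + 1) mod length cs)))"

definition CCWD :: "'a set \<Rightarrow> ('a \<times> 'a) set \<Rightarrow> ('a \<times> 'a \<Rightarrow> real) \<Rightarrow> bool" where
  "CCWD Y E f \<longleftrightarrow> wdigraph Y E \<and>
     (\<forall>cs. is_cycle Y E cs \<longrightarrow> 1 < curl E f cs \<and> curl E f cs < real (length cs) - 1)"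

definition is_path :: "'a set \<Rightarrow> ('a \<times> 'a) set \<Rightarrow> 'a list \<Rightarrow> bool" where
  "is_path Y E bs \<longleftrightarrow> bs \<noteq> [] \<and> distinct bs \<and> set bs \<subseteq> Y \<and>
     (\<forall>t. t + 1 < length bs \<longrightarrow> adj E (bs ! t) (bs ! (t + 1)))"

definition paths :: "'a set \<Rightarrow> ('a \<times> 'a) set \<Rightarrow> 'a \<Rightarrow> 'a \<Rightarrow> 'a list set" where
  "paths Y E a b = {bs. is_path Y E bs \<and> hd bs = a \<and> last bs = b}"

definition W :: "('a \<times> 'a) set \<Rightarrow> ('a \<times> 'a \<Rightarrow> real) \<Rightarrow> 'a list \<Rightarrow> real" where
  "W E f bs = (\<Sum>t < length bs - 1. fw E f (bs ! t) (bs ! (t + 1)))"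

text \<open>Minimum over a set of paths in the extended reals (min over the empty set = +infinity).\<close>
definition minW :: "('a \<times> 'a) set \<Rightarrow> ('a \<times> 'a \<Rightarrow> real) \<Rightarrow> 'a list set \<Rightarrow> ereal" where
  "minW E f P = (INF B\<in>P. ereal (W E f B))"

end

theory Submission
  imports Defs
begin

text \<open>Closing a path from \<open>ci\<close> to \<open>cj\<close> (or back) with the new edge gives a cycle
  of the extended graph, whose curl is the path weight plus the weight of the new edge in the
  appropriate direction, namely \<open>1 - x\<close> or \<open>x\<close>.  Curl consistency makes this
  curl exceed 1, which bounds \<open>x\<close> by every path weight; since there are only finitely many
  paths, the bounds pass to the minima.\<close>

lemma finite_paths:
  assumes "finite Y"
  shows "finite (paths Y E a b)"
proof (rule finite_subset[OF _ finite_lists_length_le[OF assms, of "card Y"]])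
  show "paths Y E a b \<subseteq> {xs. set xs \<subseteq> Y \<and> length xs \<le> card Y}"
  proof
    fix xs assume "xs \<in> paths Y E a b"
    then have "distinct xs" and "set xs \<subseteq> Y" unfolding paths_def is_path_def by blast+
    then show "xs \<in> {xs. set xs \<subseteq> Y \<and> length xs \<le> card Y}"
      by (metis assms card_mono distinct_card mem_Collect_eq)
  qed
qed

lemma curl_eq_W_plus_closing_edge:
  assumes "length cs \<ge> 2"
  shows "curl E f cs = W E f cs + fw E f (last cs) (hd cs)"
proof -
  define q where "q = length cs"
  have q: "q = Suc (q - 1)" using assms q_def by simp
  have "curl E f cs = (\<Sum>t < Suc (q - 1). fw E f (cs ! t) (cs ! ((t + 1) mod q)))"
    unfolding curl_def q_def[symmetric] using q by simp
  also have "\<dots> = (\<Sum>t < q - 1. fw E f (cs ! t) (cs ! ((t + 1) mod q)))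
      + fw E f (cs ! (q - 1)) (cs ! ((q - 1 + 1) mod q))"
    by (rule sum.lessThan_Suc)
  also have "\<dots> = (\<Sum>t < q - 1. fw E f (cs ! t) (cs ! (t + 1)))
      + fw E f (cs ! (q - 1)) (cs ! 0)"
    using q by (intro arg_cong2[where f = "(+)"] sum.cong) auto
  also have "\<dots> = W E f cs + fw E f (last cs) (hd cs)"
    using assms unfolding W_def q_def
    by (simp add: hd_conv_nth last_conv_nth flip: length_greater_0_conv)
  finally show ?thesis .
qed

lemma is_cycle_if_closing_edge:
  assumes path: "is_path Y E cs" and "E \<subseteq> E'"
    and "hd cs \<noteq> last cs" and "\<not> adj E (hd cs) (last cs)" and "adj E' (last cs) (hd cs)"
  shows "is_cycle Y E' cs"
proof -
  define q where "q = length cs"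
  have "cs \<noteq> []" and "distinct cs" and "set cs \<subseteq> Y"
    and adj_cs: "\<And>t. t + 1 < q \<Longrightarrow> adj E (cs ! t) (cs ! (t + 1))"
    using path by (auto simp: is_path_def q_def)
  have hd: "cs ! 0 = hd cs" and last: "cs ! (q - 1) = last cs"
    using \<open>cs \<noteq> []\<close> by (simp_all add: q_def hd_conv_nth last_conv_nth)
  have "q \<noteq> 1" using \<open>hd cs \<noteq> last cs\<close> hd last by auto
  moreover have "q \<noteq> 2" using \<open>\<not> adj E (hd cs) (last cs)\<close> adj_cs[of 0] hd last by auto
  ultimately have "q \<ge> 3" using \<open>cs \<noteq> []\<close> q_def by (cases q) auto
  have "adj E' (cs ! t) (cs ! ((t + 1) mod q))" if "t < q" for t
  proof (cases "t + 1 < q")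
    case True
    then show ?thesis using adj_cs \<open>E \<subseteq> E'\<close> by (auto simp: adj_def)
  next
    case False
    then have "t + 1 = q" using \<open>t < q\<close> by simp
    then have "t = q - 1" and "(t + 1) mod q = 0" by auto
    then show ?thesis using \<open>adj E' (last cs) (hd cs)\<close> hd last by simp
  qed
  then show ?thesis
    using \<open>q \<ge> 3\<close> \<open>distinct cs\<close> \<open>set cs \<subseteq> Y\<close> unfolding is_cycle_def q_def by blast
qed

lemma fw_insert_old_edge:
  assumes "adj E u v" and "\<not> adj E a b"
  shows "fw (insert (a, b) E) (f((a, b) := x)) u v = fw E f u v"
proof -
  have "(u, v) \<noteq> (a, b)" and "(v, u) \<noteq> (a, b)" using assms unfolding adj_def by auto
  then show ?thesis unfolding fw_def by (simp only: insert_iff fun_upd_other simp_thms)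
qed

lemma fw_insert_new_edge: "fw (insert (a, b) E) (f((a, b) := x)) a b = x"
  by (simp add: fw_def)

lemma fw_insert_new_edge_reversed:
  assumes "a \<noteq> b" and "(b, a) \<notin> E"
  shows "fw (insert (a, b) E) (f((a, b) := x)) b a = 1 - x"
  using assms by (simp add: fw_def)

lemma W_insert_edge:
  assumes "is_path Y E cs" and "\<not> adj E a b"
  shows "W (insert (a, b) E) (f((a, b) := x)) cs = W E f cs"
  unfolding W_def
proof (rule sum.cong)
  fix t assume "t \<in> {..<length cs - 1}"
  then have "adj E (cs ! t) (cs ! (t + 1))" using assms(1) by (simp add: is_path_def)
  then show "fw (insert (a, b) E) (f((a, b) := x)) (cs ! t) (cs ! (t + 1))
      = fw E f (cs ! t) (cs ! (t + 1))"
    using assms(2) by (rule fw_insert_old_edge)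
qed simp

lemma CCWD_insert_edge_path_bound:
  assumes cc: "CCWD Y (insert (a, b) E) (f((a, b) := x))"
    and "a \<noteq> b" and "\<not> adj E a b"
    and path: "is_path Y E cs" and ends: "{hd cs, last cs} = {a, b}"
  shows "1 < W E f cs + fw (insert (a, b) E) (f((a, b) := x)) (last cs) (hd cs)"
proof -
  have "hd cs \<noteq> last cs" using ends \<open>a \<noteq> b\<close> by auto
  moreover have "\<not> adj E (hd cs) (last cs)" and "adj (insert (a, b) E) (last cs) (hd cs)"
    using ends \<open>\<not> adj E a b\<close> by (auto simp: adj_def doubleton_eq_iff)
  ultimately have cycle: "is_cycle Y (insert (a, b) E) cs"
    using path by (intro is_cycle_if_closing_edge) auto
  then have "length cs \<ge> 2" by (simp add: is_cycle_def)
  have "1 < curl (insert (a, b) E) (f((a, b) := x)) cs"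
    using cc cycle by (simp add: CCWD_def)
  then show ?thesis
    using curl_eq_W_plus_closing_edge[OF \<open>length cs \<ge> 2\<close>] W_insert_edge[OF path \<open>\<not> adj E a b\<close>]
    by simp
qed

lemma ereal_less_minW:
  assumes "finite P" and "\<And>B. B \<in> P \<Longrightarrow> c < W E f B"
  shows "ereal c < minW E f P"
proof (cases "P = {}")
  case True
  then show ?thesis by (simp add: minW_def top_ereal_def)
next
  case False
  then show ?thesis
    using assms unfolding minW_def by (simp add: finite_less_Inf_iff)
qed

lemma one_minus_ereal_less:
  fixes m :: ereal
  assumes "ereal (1 - x) < m"
  shows "1 - m < ereal x"
  using assms by (cases m) (simp_all add: one_ereal_def)

theorem lemma2:
  fixes Y :: "'a set" and E :: "('a \<times> 'a) set" and f :: "'a \<times> 'a \<Rightarrow> real"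
    and ci cj :: 'a and x :: real
  assumes "CCWD Y E f"
    and "ci \<in> Y" and "cj \<in> Y" and "ci \<noteq> cj"
    and "(ci, cj) \<notin> E" and "(cj, ci) \<notin> E"
    and "CCWD Y (insert (ci, cj) E) (f((ci, cj) := x))"
  shows "1 - minW E f (paths Y E cj ci) < ereal x \<and> ereal x < minW E f (paths Y E ci cj)"
proof
  have fin: "finite Y" using assms(1) by (simp add: CCWD_def wdigraph_def)
  have not_adj: "\<not> adj E ci cj" using assms(5,6) by (simp add: adj_def)
  note bound = CCWD_insert_edge_path_bound[OF assms(7,4) not_adj]
  have "1 - x < W E f B" if "B \<in> paths Y E cj ci" for B
    using bound[of B] that by (simp add: paths_def insert_commute fw_insert_new_edge)
  then have "ereal (1 - x) < minW E f (paths Y E cj ci)"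
    by (intro ereal_less_minW finite_paths fin)
  then show "1 - minW E f (paths Y E cj ci) < ereal x"
    by (rule one_minus_ereal_less)
  have "x < W E f B" if "B \<in> paths Y E ci cj" for B
    using bound[of B] that fw_insert_new_edge_reversed[OF assms(4,6)]
    by (simp add: paths_def)
  then show "ereal x < minW E f (paths Y E ci cj)"
    by (intro ereal_less_minW finite_paths fin)
qed

end
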